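(* Let $T$ be a tree and $\alpha\ne\beta\in V(T)$, and let $\gamma_0=\alpha,\gamma_1,\dots,\gamma_{k-1},\gamma_k=\beta$ be the successive vertices of the unique minimal path in $T$ from $\alpha$ to $\beta$. Then inside $\mathsf L_T$, the Euclidean spaces $\mathsf L_T(\alpha)$ and $\mathsf L_T(\beta)$ are glued along closed quadrants, where a point $\{x_\gamma(\alpha)\}$ of $\mathsf L_T(\alpha)$ is identified with a point $\{x_\gamma(\beta)\}$ of $\mathsf L_T(\beta)$ whenever $$x_{\gamma_1}(\alpha)=x_\alpha(\beta),\ x_{\gamma_2}(\alpha)=x_{\gamma_1}(\beta),\ \dots,\ x_{\gamma_{k-1}}(\alpha)=x_{\gamma_{k-2}}(\beta),\ x_\beta(\alpha)=x_{\gamma_{k-1}}(\beta)\ge0,$$ and $x_\gamma(\alpha)=x_\gamma(\beta)$ for all $\gamma\notin\{\alpha,\gamma_1,\dots,\gamma_{k-1},\beta\}$.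
   Context: A tree is a nonempty finite connected acyclic graph with vertex set $V(T)$ and edge set $E(T)$ (two-element subsets of $V(T)$). Arboreal singularity: for $\alpha\in V(T)$ let $\mathsf L_T(\alpha)=\mathbb R^{V(T)\setminus\{\alpha\}}$ with coordinates $x_\gamma(\alpha)$, $\gamma\ne\alpha$; $\mathsf L_T$ is the quotient of $\coprod_{\alpha\in V(T)}\mathsf L_T(\alpha)$ by the equivalence relation generated by the $\{\alpha,\beta\}$-edge gluings, for $\{\alpha,\beta\}\in E(T)$: $\{x_\gamma(\alpha)\}\sim\{x_\gamma(\beta)\}$ whenever $x_\beta(\alpha)=x_\alpha(\beta)\ge0$ and $x_\gamma(\alpha)=x_\gamma(\beta)$ for all $\gamma\ne\alpha,\beta$. *)

theory Defs
  imports Complex_Main "HOL-Library.FuncSet"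
begin

definition edges_ok :: "'v set \<Rightarrow> 'v set set \<Rightarrow> bool" where
  "edges_ok V E \<longleftrightarrow> (\<forall>e\<in>E. \<exists>a b. a \<in> V \<and> b \<in> V \<and> a \<noteq> b \<and> e = {a, b})"

definition is_walk :: "'v set \<Rightarrow> 'v set set \<Rightarrow> 'v list \<Rightarrow> bool" where
  "is_walk V E ps \<longleftrightarrow> ps \<noteq> [] \<and> set ps \<subseteq> V \<and>
     (\<forall>i. Suc i < length ps \<longrightarrow> {ps ! i, ps ! Suc i} \<in> E)"

definition connected_graph :: "'v set \<Rightarrow> 'v set set \<Rightarrow> bool" where
  "connected_graph V E \<longleftrightarrow>
     (\<forall>a\<in>V. \<forall>b\<in>V. \<exists>ps. is_walk V E ps \<and> hd ps = a \<and> last ps = b)"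

definition has_cycle :: "'v set \<Rightarrow> 'v set set \<Rightarrow> bool" where
  "has_cycle V E \<longleftrightarrow> (\<exists>ps. is_walk V E ps \<and> distinct ps \<and> length ps \<ge> 3 \<and>
      {last ps, hd ps} \<in> E)"

definition is_tree :: "'v set \<Rightarrow> 'v set set \<Rightarrow> bool" where
  "is_tree V E \<longleftrightarrow> V \<noteq> {} \<and> finite V \<and> edges_ok V E \<and>
     connected_graph V E \<and> \<not> has_cycle V E"

text \<open>The chart L_T(alpha) = R^(V - {alpha}), represented by functions
  extensional outside V - {alpha}. Points of the disjoint union are pairs (alpha, x).\<close>
definition chart :: "'v set \<Rightarrow> 'v \<Rightarrow> ('v \<Rightarrow> real) set" where
  "chart V a = extensional (V - {a})"

definition in_union :: "'v set \<Rightarrow> 'v \<times> ('v \<Rightarrow> real) \<Rightarrow> bool" where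
  "in_union V p \<longleftrightarrow> fst p \<in> V \<and> snd p \<in> chart V (fst p)"

definition edge_glue :: "'v set \<Rightarrow> 'v set set \<Rightarrow>
    'v \<times> ('v \<Rightarrow> real) \<Rightarrow> 'v \<times> ('v \<Rightarrow> real) \<Rightarrow> bool" where
  "edge_glue V E p q \<longleftrightarrow> in_union V p \<and> in_union V q \<and>
     (let a = fst p; b = fst q; x = snd p; y = snd q in
       {a, b} \<in> E \<and> x b = y a \<and> x b \<ge> 0 \<and>
       (\<forall>g\<in>V - {a, b}. x g = y g))"

definition arb_equiv :: "'v set \<Rightarrow> 'v set set \<Rightarrow>
    'v \<times> ('v \<Rightarrow> real) \<Rightarrow> 'v \<times> ('v \<Rightarrow> real) \<Rightarrow> bool" where
  "arb_equiv V E = equivclp (edge_glue V E)"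

end

theory Submission
  imports Defs
begin

text \<open>Crossing an edge \<open>{u, v}\<close> renames the coordinate \<open>x\<^sub>v\<close> of \<open>L\<^sub>T(u)\<close> into
  \<open>x\<^sub>u\<close> of \<open>L\<^sub>T(v)\<close> and requires it to be nonnegative, so composing the gluings along a
  simple walk yields the stated relation between its end charts. Conversely, this relation
  "glued along some simple walk" is invariant under one more edge gluing: the new edge either
  extends the walk by a fresh vertex or, because the graph has no cycles, retracts its last edge.
  Hence it contains the generated equivalence. Finally a shortest walk is simple, and simple
  walks in a tree are determined by their endpoints.\<close>

lemma is_walk_iff_successively:
  "is_walk V E ps \<longleftrightarrow> ps \<noteq> [] \<and> set ps \<subseteq> V \<and> successively (\<lambda>u v. {u, v} \<in> E) ps"
  by (simp add: is_walk_def successively_conv_nth)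

lemma successively_cong_pairs:
  assumes "\<And>u v. u \<in> set (butlast xs) \<Longrightarrow> v \<in> set (tl xs) \<Longrightarrow> P u v \<longleftrightarrow> Q u v"
  shows "successively P xs \<longleftrightarrow> successively Q xs"
  using assms by (induction xs rule: induct_list012) auto

lemma distinct_hd_eq_last:
  assumes "distinct xs" "xs \<noteq> []" "hd xs = last xs"
  shows "xs = [hd xs]"
  using assms by (cases xs) (auto split: if_splits)

lemma successively_append_Cons_iff:
  "successively P (xs @ y # zs) \<longleftrightarrow> successively P (xs @ [y]) \<and> successively P (y # zs)"
  by (auto simp: successively_append_iff)

lemma shortest_walk_distinct:
  assumes walk: "is_walk V E ps"
    and shortest: "\<And>qs. is_walk V E qs \<Longrightarrow> hd qs = hd ps \<Longrightarrow> last qs = last ps \<Longrightarrow>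
      length ps \<le> length qs"
  shows "distinct ps"
proof (rule ccontr)
  assume "\<not> distinct ps"
  then obtain xs ys zs y where ps: "ps = xs @ [y] @ ys @ [y] @ zs"
    using not_distinct_decomp by blast
  define qs where "qs = xs @ y # zs"
  have "successively (\<lambda>u v. {u, v} \<in> E) ((xs @ [y]) @ (ys @ [y] @ zs))"
    "successively (\<lambda>u v. {u, v} \<in> E) ((xs @ [y] @ ys) @ (y # zs))"
    using walk by (simp_all add: is_walk_iff_successively ps)
  then have "successively (\<lambda>u v. {u, v} \<in> E) (xs @ [y])"
    "successively (\<lambda>u v. {u, v} \<in> E) (y # zs)"
    by (simp_all only: successively_append_iff)
  then have "is_walk V E qs"
    using walk by (simp add: is_walk_iff_successively successively_append_Cons_iff[of _ xs y zs] qs_def ps)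
  moreover have "hd qs = hd ps" "last qs = last ps"
    by (cases xs; simp add: qs_def ps)+
  ultimately have "length ps \<le> length qs" by (rule shortest)
  then show False by (simp add: qs_def ps)
qed

text \<open>In an acyclic graph a simple walk can only return to a neighbour of its endpoint
  by backtracking along the last edge; otherwise that neighbour closes a cycle.\<close>

lemma neighbour_of_last_on_simple_walk:
  assumes acyclic: "\<not> has_cycle V E" and walk: "is_walk V E ps" and "distinct ps"
    and edge: "{last ps, d} \<in> E" and "d \<in> set ps" "d \<noteq> last ps"
  shows "\<exists>A. ps = A @ [d, last ps]"
proof -
  obtain A C where ps: "ps = A @ d # C"
    using \<open>d \<in> set ps\<close> split_list by metis
  have "C \<noteq> []" using ps \<open>d \<noteq> last ps\<close> by auto
  show ?thesis
  proof (cases "length C = 1")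
    case True
    then obtain c where "C = [c]" by (cases C) auto
    then show ?thesis using ps by simp
  next
    case False
    have "is_walk V E (d # C)"
      using walk by (auto simp: is_walk_iff_successively successively_append_iff ps)
    moreover have "distinct (d # C)" using \<open>distinct ps\<close> ps by simp
    moreover have "3 \<le> length (d # C)"
      using \<open>C \<noteq> []\<close> False by (cases C) (auto simp: Suc_le_eq)
    moreover have "{last (d # C), hd (d # C)} \<in> E"
      using edge \<open>C \<noteq> []\<close> ps by simp
    ultimately have "has_cycle V E" unfolding has_cycle_def by blast
    with acyclic show ?thesis by contradiction
  qed
qed

lemma simple_walk_unique:
  assumes acyclic: "\<not> has_cycle V E"
  shows "is_walk V E qs \<Longrightarrow> distinct qs \<Longrightarrow> is_walk V E ps \<Longrightarrow> distinct ps \<Longrightarrow>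
    hd ps = hd qs \<Longrightarrow> last ps = last qs \<Longrightarrow> ps = qs"
proof (induction qs arbitrary: ps rule: rev_induct)
  case Nil
  then show ?case by (simp add: is_walk_def)
next
  case (snoc d qs)
  have "ps \<noteq> []" using snoc.prems(3) by (simp add: is_walk_def)
  show ?case
  proof (cases "qs = []")
    case True
    then show ?thesis
      using distinct_hd_eq_last[of ps] \<open>ps \<noteq> []\<close> snoc.prems by simp
  next
    case False
    define c where "c = last qs"
    have qs_walk: "is_walk V E qs" and edge: "{last ps, c} \<in> E"
      using snoc.prems(1,6) False
      by (auto simp: is_walk_iff_successively successively_append_iff c_def insert_commute)
    have "distinct qs" "d \<notin> set qs" "c \<in> set qs"
      using snoc.prems(2) False by (auto simp: c_def)
    have hd_ps: "hd ps = hd qs" and last_ps: "last ps = d"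
      using snoc.prems(5,6) False by auto
    show ?thesis
    proof (cases "c \<in> set ps")
      case True
      have "c \<noteq> last ps" using \<open>d \<notin> set qs\<close> \<open>c \<in> set qs\<close> last_ps by auto
      then obtain A where ps: "ps = A @ [c, d]"
        using neighbour_of_last_on_simple_walk[OF acyclic snoc.prems(3,4) edge True] last_ps
        by auto
      have "is_walk V E (A @ [c])"
        using snoc.prems(3) unfolding ps is_walk_iff_successively
        by (simp add: successively_append_iff)
      moreover have "distinct (A @ [c])" using snoc.prems(4) ps by simp
      moreover have "hd (A @ [c]) = hd qs" using hd_ps ps by (cases A) simp_all
      moreover have "last (A @ [c]) = last qs" by (simp add: c_def)
      ultimately have "A @ [c] = qs" by (rule snoc.IH[OF qs_walk \<open>distinct qs\<close>])
      then show ?thesis using ps by simp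
    next
      case False
      have "is_walk V E (ps @ [c])"
        using snoc.prems(3) edge \<open>c \<in> set qs\<close> qs_walk \<open>ps \<noteq> []\<close>
        unfolding is_walk_iff_successively by (auto simp: successively_append_iff)
      moreover have "distinct (ps @ [c])" using snoc.prems(4) False by simp
      moreover have "hd (ps @ [c]) = hd qs" using hd_ps \<open>ps \<noteq> []\<close> by simp
      moreover have "last (ps @ [c]) = last qs" by (simp add: c_def)
      ultimately have "ps @ [c] = qs" by (rule snoc.IH[OF qs_walk \<open>distinct qs\<close>])
      then have "d \<in> set qs" using last_ps \<open>ps \<noteq> []\<close> by auto
      with \<open>d \<notin> set qs\<close> show ?thesis by contradiction
    qed
  qed
qed

definition glued_along :: "'v set \<Rightarrow> 'v list \<Rightarrow> ('v \<Rightarrow> real) \<Rightarrow> ('v \<Rightarrow> real) \<Rightarrow> bool" where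
  "glued_along V ps x y \<longleftrightarrow>
     successively (\<lambda>u v. x v = y u \<and> 0 \<le> x v) ps \<and> (\<forall>g\<in>V - set ps. x g = y g)"

lemma edge_glue_iff:
  "edge_glue V E (a, x) (b, y) \<longleftrightarrow> a \<in> V \<and> x \<in> chart V a \<and> b \<in> V \<and> y \<in> chart V b \<and>
     {a, b} \<in> E \<and> x b = y a \<and> 0 \<le> x b \<and> (\<forall>g\<in>V - {a, b}. x g = y g)"
  by (auto simp: edge_glue_def in_union_def Let_def)

lemma edge_glue_sym: "edge_glue V E p q \<Longrightarrow> edge_glue V E q p"
  by (auto simp: edge_glue_def Let_def insert_commute)

lemma glued_along_snoc:
  assumes glued: "glued_along V ps x y" and "distinct ps" "ps \<noteq> []" "set ps \<subseteq> V" "d \<notin> set ps"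
    and glue: "edge_glue V E (last ps, y) (d, z)"
  shows "glued_along V (ps @ [d]) x z"
proof -
  have "d \<in> V" "y d = z (last ps)" "0 \<le> y d" and y_z: "\<forall>g\<in>V - {last ps, d}. y g = z g"
    using glue by (simp_all add: edge_glue_iff)
  have "last ps \<notin> set (butlast ps)"
    using \<open>distinct ps\<close> by (cases ps rule: rev_cases) auto
  then have "\<And>u. u \<in> set (butlast ps) \<Longrightarrow> y u = z u"
    using y_z \<open>set ps \<subseteq> V\<close> \<open>d \<notin> set ps\<close> by (force dest: in_set_butlastD)
  then have "successively (\<lambda>u v. x v = y u \<and> 0 \<le> x v) ps \<longleftrightarrow>
      successively (\<lambda>u v. x v = z u \<and> 0 \<le> x v) ps"
    by (intro successively_cong_pairs) simp
  then have "successively (\<lambda>u v. x v = z u \<and> 0 \<le> x v) ps"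
    using glued unfolding glued_along_def by blast
  moreover have "x d = z (last ps) \<and> 0 \<le> x d"
    using glued \<open>d \<in> V\<close> \<open>d \<notin> set ps\<close> \<open>y d = z (last ps)\<close> \<open>0 \<le> y d\<close>
    by (simp add: glued_along_def)
  moreover have "\<forall>g\<in>V - set (ps @ [d]). x g = z g"
    using glued y_z \<open>ps \<noteq> []\<close> by (auto simp: glued_along_def)
  ultimately show ?thesis
    using \<open>ps \<noteq> []\<close> by (simp add: glued_along_def successively_append_iff)
qed

lemma glued_along_backtrack:
  assumes glued: "glued_along V (A @ [d, b]) x y" and "distinct (A @ [d, b])" "set A \<subseteq> V"
    and glue: "edge_glue V E (b, y) (d, z)"
  shows "glued_along V (A @ [d]) x z"
proof -
  have y_z: "\<forall>g\<in>V - {b, d}. y g = z g" and "y d = z b"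
    using glue by (simp_all add: edge_glue_iff)
  have glued_xy: "successively (\<lambda>u v. x v = y u \<and> 0 \<le> x v) (A @ [d])" "x b = y d"
    using glued by (simp_all add: glued_along_def successively_append_iff)
  have "\<And>u. u \<in> set (butlast (A @ [d])) \<Longrightarrow> y u = z u"
    using y_z \<open>distinct (A @ [d, b])\<close> \<open>set A \<subseteq> V\<close> by auto
  then have "successively (\<lambda>u v. x v = y u \<and> 0 \<le> x v) (A @ [d]) \<longleftrightarrow>
      successively (\<lambda>u v. x v = z u \<and> 0 \<le> x v) (A @ [d])"
    by (intro successively_cong_pairs) simp
  moreover have "\<forall>g\<in>V - set (A @ [d]). x g = z g"
    using glued y_z \<open>x b = y d\<close> \<open>y d = z b\<close> by (auto simp: glued_along_def)
  ultimately show ?thesis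
    using glued_xy by (simp add: glued_along_def)
qed

definition glued_by_simple_walk ::
    "'v set \<Rightarrow> 'v set set \<Rightarrow> 'v \<times> ('v \<Rightarrow> real) \<Rightarrow> 'v \<times> ('v \<Rightarrow> real) \<Rightarrow> bool" where
  "glued_by_simple_walk V E p q \<longleftrightarrow> (\<exists>ps. is_walk V E ps \<and> distinct ps \<and>
     hd ps = fst p \<and> last ps = fst q \<and> glued_along V ps (snd p) (snd q))"

text \<open>Each edge gluing either extends the simple walk by a new vertex or, in a tree,
  retracts its last edge.\<close>

lemma glued_by_simple_walk_edge_glue:
  assumes "edges_ok V E" and acyclic: "\<not> has_cycle V E"
    and "glued_by_simple_walk V E (a, x) (b, y)" and glue: "edge_glue V E (b, y) (d, z)"
  shows "glued_by_simple_walk V E (a, x) (d, z)"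
proof -
  obtain ps where walk: "is_walk V E ps" and "distinct ps" "hd ps = a" "last ps = b"
    and glued: "glued_along V ps x y"
    using assms(3) by (auto simp: glued_by_simple_walk_def)
  have "ps \<noteq> []" "set ps \<subseteq> V" using walk by (simp_all add: is_walk_def)
  have edge: "{b, d} \<in> E" and "d \<in> V" using glue by (simp_all add: edge_glue_iff)
  then have "b \<noteq> d" using \<open>edges_ok V E\<close> by (auto simp: edges_ok_def doubleton_eq_iff)
  show ?thesis
  proof (cases "d \<in> set ps")
    case False
    have "is_walk V E (ps @ [d])"
      using walk edge \<open>d \<in> V\<close> \<open>last ps = b\<close>
      by (auto simp: is_walk_iff_successively successively_append_iff)
    moreover have "glued_along V (ps @ [d]) x z"
      using glued_along_snoc[OF glued \<open>distinct ps\<close> \<open>ps \<noteq> []\<close> \<open>set ps \<subseteq> V\<close> False] glue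
        \<open>last ps = b\<close> by simp
    ultimately show ?thesis
      using \<open>distinct ps\<close> False \<open>hd ps = a\<close> \<open>ps \<noteq> []\<close>
      unfolding glued_by_simple_walk_def by (intro exI[of _ "ps @ [d]"]) simp
  next
    case True
    then obtain A where ps: "ps = A @ [d, b]"
      using neighbour_of_last_on_simple_walk[OF acyclic walk \<open>distinct ps\<close>] edge \<open>b \<noteq> d\<close>
        \<open>last ps = b\<close> by auto
    have "is_walk V E (A @ [d])"
      using walk unfolding ps is_walk_iff_successively by (simp add: successively_append_iff)
    moreover have "glued_along V (A @ [d]) x z"
      using glued_along_backtrack[of V A d b x y] glued \<open>distinct ps\<close> \<open>set ps \<subseteq> V\<close> glue
      by (simp add: ps)
    moreover have "hd (A @ [d]) = a" using \<open>hd ps = a\<close> ps by (cases A) simp_all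
    ultimately show ?thesis
      using \<open>distinct ps\<close> unfolding glued_by_simple_walk_def ps by (intro exI[of _ "A @ [d]"]) simp
  qed
qed

lemma arb_equiv_imp_glued_by_simple_walk:
  assumes "edges_ok V E" "\<not> has_cycle V E" "in_union V p" "arb_equiv V E p q"
  shows "glued_by_simple_walk V E p q"
  using assms(4) unfolding arb_equiv_def
proof (induction rule: equivclp_induct)
  case base
  have "is_walk V E [fst p]" using \<open>in_union V p\<close> by (simp add: is_walk_def in_union_def)
  then show ?case by (auto simp: glued_by_simple_walk_def glued_along_def intro!: exI[of _ "[fst p]"])
next
  case (step q r)
  then have "edge_glue V E q r" using edge_glue_sym by blast
  then show ?case
    using glued_by_simple_walk_edge_glue[OF assms(1,2), of "fst p" "snd p" "fst q" "snd q"] step.IH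
    by (cases r) simp
qed

text \<open>The image of \<open>x \<in> L\<^sub>T(a)\<close> in the neighbouring chart \<open>L\<^sub>T(c)\<close>: coordinate \<open>c\<close>
  becomes coordinate \<open>a\<close>.\<close>

lemma edge_glue_to_neighbour:
  assumes "{a, c} \<in> E" "a \<in> V" "c \<in> V" "a \<noteq> c" "x \<in> chart V a" "0 \<le> x c"
  shows "edge_glue V E (a, x) (c, restrict (x(a := x c)) (V - {c}))"
  using assms by (auto simp: edge_glue_iff chart_def)

lemma glued_along_Cons:
  assumes glued: "glued_along V (a # c # ps) x y" and "distinct (a # c # ps)" "set ps \<subseteq> V"
  shows "glued_along V (c # ps) (restrict (x(a := x c)) (V - {c})) y"
proof -
  let ?w = "restrict (x(a := x c)) (V - {c})"
  have "\<And>v. v \<in> set (tl (c # ps)) \<Longrightarrow> ?w v = x v"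
    using \<open>distinct (a # c # ps)\<close> \<open>set ps \<subseteq> V\<close> by auto
  then have "successively (\<lambda>u v. ?w v = y u \<and> 0 \<le> ?w v) (c # ps) \<longleftrightarrow>
      successively (\<lambda>u v. x v = y u \<and> 0 \<le> x v) (c # ps)"
    by (intro successively_cong_pairs) simp
  moreover have "successively (\<lambda>u v. x v = y u \<and> 0 \<le> x v) (c # ps)"
    using glued by (simp add: glued_along_def)
  ultimately have "successively (\<lambda>u v. ?w v = y u \<and> 0 \<le> ?w v) (c # ps)"
    by (rule iffD2)
  moreover have "\<forall>g\<in>V - set (c # ps). ?w g = y g"
    using glued by (auto simp: glued_along_def)
  ultimately show ?thesis
    unfolding glued_along_def by (rule conjI)
qed

lemma glued_along_imp_arb_equiv:
  "is_walk V E ps \<Longrightarrow> distinct ps \<Longrightarrow> x \<in> chart V (hd ps) \<Longrightarrow> y \<in> chart V (last ps) \<Longrightarrow>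
    glued_along V ps x y \<Longrightarrow> arb_equiv V E (hd ps, x) (last ps, y)"
proof (induction ps arbitrary: x rule: induct_list012)
  case 1
  then show ?case by (simp add: is_walk_def)
next
  case (2 a)
  then have "x = y"
    by (intro extensionalityI[of _ "V - {a}"]) (auto simp: chart_def glued_along_def)
  then show ?case by (simp add: arb_equiv_def)
next
  case (3 a c ps)
  let ?w = "restrict (x(a := x c)) (V - {c})"
  have edge: "{a, c} \<in> E" and "a \<in> V" "c \<in> V" "set ps \<subseteq> V" "is_walk V E (c # ps)"
    using "3.prems"(1) by (simp_all add: is_walk_iff_successively)
  have "a \<noteq> c" using "3.prems"(2) by simp
  have "0 \<le> x c" using "3.prems"(5) by (simp add: glued_along_def)
  have "x \<in> chart V a" using "3.prems"(3) by simp
  have "edge_glue V E (a, x) (c, ?w)"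
    by (rule edge_glue_to_neighbour) fact+
  moreover have "arb_equiv V E (hd (c # ps), ?w) (last (c # ps), y)"
  proof (rule "3.IH"(2))
    show "glued_along V (c # ps) ?w y"
      by (rule glued_along_Cons[OF "3.prems"(5,2) \<open>set ps \<subseteq> V\<close>])
    show "?w \<in> chart V (hd (c # ps))"
      unfolding chart_def by (simp only: list.sel(1) restrict_extensional)
    show "distinct (c # ps)" using "3.prems"(2) by simp
    show "y \<in> chart V (last (c # ps))" using "3.prems"(4) by simp
  qed fact
  ultimately show ?case
    unfolding arb_equiv_def by (metis r_into_equivclp equivclp_trans list.sel(1) last_ConsR list.discI)
qed

theorem lemma2p6:
  fixes V :: "'v set" and E :: "'v set set" and a b :: 'v and ps :: "'v list"
    and x y :: "'v \<Rightarrow> real"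
  assumes "is_tree V E"
    and "a \<in> V" and "b \<in> V" and "a \<noteq> b"
    and "is_walk V E ps" and "hd ps = a" and "last ps = b"
    and "\<forall>qs. is_walk V E qs \<and> hd qs = a \<and> last qs = b \<longrightarrow> length ps \<le> length qs"
    and "x \<in> chart V a" and "y \<in> chart V b"
  shows "arb_equiv V E (a, x) (b, y) \<longleftrightarrow>
    ((\<forall>i. Suc i < length ps \<longrightarrow> x (ps ! Suc i) = y (ps ! i) \<and> x (ps ! Suc i) \<ge> 0) \<and>
     (\<forall>g\<in>V - set ps. x g = y g))"
proof -
  have "edges_ok V E" and acyclic: "\<not> has_cycle V E"
    using \<open>is_tree V E\<close> by (simp_all add: is_tree_def)
  have "distinct ps"
    using shortest_walk_distinct[of V E ps] assms(5-8) by simp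
  have "arb_equiv V E (a, x) (b, y) \<longleftrightarrow> glued_along V ps x y"
  proof
    assume "arb_equiv V E (a, x) (b, y)"
    then have "glued_by_simple_walk V E (a, x) (b, y)"
      using arb_equiv_imp_glued_by_simple_walk[OF \<open>edges_ok V E\<close> acyclic] assms(2,9)
      by (simp add: in_union_def)
    then obtain qs where "is_walk V E qs" "distinct qs" "hd qs = a" "last qs = b"
      and "glued_along V qs x y"
      by (auto simp: glued_by_simple_walk_def)
    moreover have "qs = ps"
      using simple_walk_unique[OF acyclic] calculation assms(5-7) \<open>distinct ps\<close> by metis
    ultimately show "glued_along V ps x y" by simp
  next
    assume "glued_along V ps x y"
    then show "arb_equiv V E (a, x) (b, y)"
      using glued_along_imp_arb_equiv[of V E ps x y] assms(5-7,9,10) \<open>distinct ps\<close> by simp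
  qed
  then show ?thesis by (simp add: glued_along_def successively_conv_nth)
qed

end
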